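(* Let $\alpha>0$, let $X_1,X_2,\dots$ be independent uniform random variables on $(0,1]$ and $\mathcal{U}_m^0=(0,X_1,\dots,X_m)$. There is a random variable $\mathcal{L}_0^\alpha$ having the generalized Dickman distribution with parameter $1/\alpha$ such that, as $m\to\infty$, $\mathcal{L}_0^\alpha(\mathcal{U}_m^0)\to\mathcal{L}_0^\alpha$ almost surely and in $L^2$.
   Context: The directed linear tree on $(0,x_1,\dots,x_m)$ (with $x_0:=0$) joins each $x_i$ ($i\ge1$) to $\max\{x_j:0\le j<i,\ x_j<x_i\}$, the edge having weight $(x_i-\max\{x_j:0\le j<i,\ x_j<x_i\})^\alpha$. $\mathcal{L}_0^\alpha(\mathcal{U}_m^0)$ is the total weight of edges incident to $0$ in the directed linear tree on $\mathcal{U}_m^0$. The generalized Dickman distribution with parameter $1/\alpha$ is the distribution of a nonnegative random variable $X$ satisfying $X\stackrel{d}{=}U^\alpha(1+X)$, with $U$ uniform on $(0,1)$ independent of $X$ on the right; equivalently the law of $\sum_{k\ge1}(U_1\cdots U_k)^\alpha$ for i.i.d. uniform $U_i$ on $(0,1)$. *)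

theory Defs
  imports "HOL-Probability.Probability"
begin

text \<open>Directed linear tree on the sequence x 0, x 1, ..., x m (with x 0 = 0 in the
application): vertex i >= 1 is joined to the largest earlier value below x i.\<close>
definition dlt_parent :: "(nat \<Rightarrow> real) \<Rightarrow> nat \<Rightarrow> real" where
  "dlt_parent x i = Max {x j | j. j < i \<and> x j < x i}"

text \<open>Total weight of edges incident to the vertex x 0 in the directed linear tree
on (x 0, x 1, ..., x m); the edge from x i has weight (x i - parent)^alpha.\<close>
definition L0 :: "real \<Rightarrow> (nat \<Rightarrow> real) \<Rightarrow> nat \<Rightarrow> real" where
  "L0 \<alpha> x m = (\<Sum>i\<in>{1..m}. if dlt_parent x i = x 0
                              then (x i - dlt_parent x i) powr \<alpha> else 0)"

definition gen_dickman :: "real \<Rightarrow> real measure \<Rightarrow> bool" where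
  "gen_dickman \<theta> \<mu> \<longleftrightarrow>
     prob_space \<mu> \<and> sets \<mu> = sets borel \<and> (AE x in \<mu>. 0 \<le> x) \<and>
     \<mu> = distr (uniform_measure lborel {0<..<1} \<Otimes>\<^sub>M \<mu>) borel
            (\<lambda>(u, x). u powr (1 / \<theta>) * (1 + x))"

end

theory Submission
  imports Defs
begin

text \<open>With x 0 = 0 and the other points in (0,1], the edge from x i ends at the origin exactly when
  x i is a lower record of x 1, ..., x i, and its weight is then x i powr alpha. So L0 is the sum
  S m of the alpha-th powers of the lower records among the first m uniforms. Conditioning on the
  first uniform bounds E S m by 1/alpha and E (S m)^2 uniformly in m, so the nondecreasing S m
  converge almost surely and, by dominated convergence, in L2 to a limit L.

  Restricting to records below s gives limits L(s) with L(1) = L, and the same conditioning shows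
  that phi t s = E exp(i t L(s)) satisfies s phi t s = int_0^s exp(i t x^alpha) phi t x dx with
  phi t s - 1 = O(s^alpha). This Volterra equation has at most one solution with such a bound,
  which gives the scaling phi t s = phi (t s^alpha) 1. Substituted back into the equation, the
  scaling says that L and U^alpha (1 + L) have the same characteristic function, and Levy's
  uniqueness theorem concludes.\<close>

section \<open>Lower records\<close>

definition record_sum :: "real \<Rightarrow> real \<Rightarrow> (nat \<Rightarrow> real) \<Rightarrow> nat \<Rightarrow> nat \<Rightarrow> real" where
  "record_sum a s x n m =
     (\<Sum>i\<in>{Suc n..n + m}. if x i \<le> s \<and> (\<forall>j\<in>{Suc n..<i}. x i \<le> x j) then x i powr a else 0)"

lemma record_sum_0 [simp]: "record_sum a s x n 0 = 0"
  by (simp add: record_sum_def)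

lemma record_sum_Suc:
  "record_sum a s x n (Suc m) =
     (if x (Suc n) \<le> s then x (Suc n) powr a + record_sum a (x (Suc n)) x (Suc n) m
      else record_sum a s x (Suc n) m)"
proof -
  let ?s' = "if x (Suc n) \<le> s then x (Suc n) else s"
  have first: "{Suc n..n + Suc m} = insert (Suc n) {Suc (Suc n)..Suc n + m}" by auto
  have rest: "(if x i \<le> s \<and> (\<forall>j\<in>{Suc n..<i}. x i \<le> x j) then x i powr a else 0) =
              (if x i \<le> ?s' \<and> (\<forall>j\<in>{Suc (Suc n)..<i}. x i \<le> x j) then x i powr a else 0)"
    if "i \<in> {Suc (Suc n)..Suc n + m}" for i
  proof -
    from that have "{Suc n..<i} = insert (Suc n) {Suc (Suc n)..<i}" by auto
    then show ?thesis by auto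
  qed
  have "record_sum a s x n (Suc m) =
        (if x (Suc n) \<le> s then x (Suc n) powr a else 0) + record_sum a ?s' x (Suc n) m"
    unfolding record_sum_def first using rest by (simp add: sum.insert)
  then show ?thesis by simp
qed

lemma record_sum_nonneg: "0 \<le> record_sum a s x n m"
  unfolding record_sum_def by (intro sum_nonneg) simp

lemma record_sum_mono: "m \<le> m' \<Longrightarrow> record_sum a s x n m \<le> record_sum a s x n m'"
  unfolding record_sum_def by (intro sum_mono2) auto

lemma record_sum_mono_threshold: "s \<le> s' \<Longrightarrow> record_sum a s x n m \<le> record_sum a s' x n m"
  unfolding record_sum_def by (intro sum_mono) auto

lemma record_sum_le:
  assumes "0 \<le> a" and "\<And>i. 0 \<le> x i \<and> x i \<le> 1"
  shows "record_sum a s x n m \<le> m"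
proof -
  have "record_sum a s x n m \<le> (\<Sum>i\<in>{Suc n..n + m}. 1)"
    unfolding record_sum_def by (intro sum_mono) (use assms in \<open>auto intro: powr_le1\<close>)
  then show ?thesis by simp
qed

lemma record_sum_cong:
  assumes "\<And>i. i \<in> {Suc n..n + m} \<Longrightarrow> x i = y i"
  shows "record_sum a s x n m = record_sum a s y n m"
  unfolding record_sum_def
proof (rule sum.cong[OF refl])
  fix i assume i: "i \<in> {Suc n..n + m}"
  then have "\<forall>j\<in>{Suc n..<i}. x j = y j" using assms by auto
  then show "(if x i \<le> s \<and> (\<forall>j\<in>{Suc n..<i}. x i \<le> x j) then x i powr a else 0) =
             (if y i \<le> s \<and> (\<forall>j\<in>{Suc n..<i}. y i \<le> y j) then y i powr a else 0)"
    using assms[OF i] by simp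
qed

lemma measurable_record_sum:
  assumes "S \<in> borel_measurable N"
    and "\<And>i. i \<in> {Suc n..n + m} \<Longrightarrow> (\<lambda>\<omega>. Z \<omega> i) \<in> borel_measurable N"
  shows "(\<lambda>\<omega>. record_sum a (S \<omega>) (Z \<omega>) n m) \<in> borel_measurable N"
  using assms
proof (induction m arbitrary: n S)
  case 0
  then show ?case by simp
next
  case (Suc m)
  have [measurable]: "(\<lambda>\<omega>. Z \<omega> (Suc n)) \<in> borel_measurable N" "S \<in> borel_measurable N"
    using Suc.prems by auto
  have [measurable]: "(\<lambda>\<omega>. record_sum a (T \<omega>) (Z \<omega>) (Suc n) m) \<in> borel_measurable N"
    if "T \<in> borel_measurable N" for T
    by (rule Suc.IH[OF that]) (use Suc.prems in auto)
  show ?case unfolding record_sum_Suc by measurable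
qed

lemma dlt_parent_eq_origin_iff:
  assumes x0: "x 0 = 0" and pos: "\<And>j. j \<in> {1..<i} \<Longrightarrow> 0 < x j" and xi: "0 < x i"
  shows "dlt_parent x i = x 0 \<longleftrightarrow> (\<forall>j\<in>{Suc 0..<i}. x i \<le> x j)"
proof
  let ?S = "{x j |j. j < i \<and> x j < x i}"
  have "?S \<subseteq> x ` {..<i}" by auto
  then have fin: "finite ?S" by (rule finite_subset) simp
  assume parent: "dlt_parent x i = x 0"
  show "\<forall>j\<in>{Suc 0..<i}. x i \<le> x j"
  proof (rule ccontr)
    assume "\<not> (\<forall>j\<in>{Suc 0..<i}. x i \<le> x j)"
    then obtain j where j: "j \<in> {Suc 0..<i}" "x j < x i" by force
    then have "x j \<le> Max ?S" using fin by (intro Max_ge) auto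
    moreover have "0 < x j" using pos j by auto
    ultimately show False using parent x0 unfolding dlt_parent_def by simp
  qed
next
  assume min: "\<forall>j\<in>{Suc 0..<i}. x i \<le> x j"
  have "i \<noteq> 0" using xi x0 by (cases i) auto
  have "{x j |j. j < i \<and> x j < x i} = {0}"
  proof safe
    fix j assume "j < i" "x j < x i"
    then show "x j = 0" using min x0 by (cases j) force+
  next
    show "\<exists>j. 0 = x j \<and> j < i \<and> x j < x i" using \<open>i \<noteq> 0\<close> x0 xi by force
  qed
  then show "dlt_parent x i = x 0" unfolding dlt_parent_def using x0 by simp
qed

lemma L0_eq_record_sum:
  assumes x0: "x 0 = 0" and pos: "\<And>j. j \<ge> 1 \<Longrightarrow> 0 < x j \<and> x j \<le> 1"
  shows "L0 a x m = record_sum a 1 x 0 m"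
  unfolding L0_def record_sum_def
proof (rule sum.cong)
  fix i assume i: "i \<in> {Suc 0..0 + m}"
  have xi: "0 < x i" "x i \<le> 1" using pos i by auto
  have "dlt_parent x i = x 0 \<longleftrightarrow> (\<forall>j\<in>{Suc 0..<i}. x i \<le> x j)"
    by (rule dlt_parent_eq_origin_iff[where x = x and i = i, OF x0]) (use pos xi in auto)
  then show "(if dlt_parent x i = x 0 then (x i - dlt_parent x i) powr a else 0) =
             (if x i \<le> 1 \<and> (\<forall>j\<in>{Suc 0..<i}. x i \<le> x j) then x i powr a else 0)"
    using xi x0 by auto
qed simp

lemma measurable_dlt_parent:
  assumes Z: "\<And>j. (\<lambda>\<omega>. Z \<omega> j) \<in> borel_measurable N"
  shows "(\<lambda>\<omega>. dlt_parent (Z \<omega>) i) \<in> borel_measurable N"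
proof -
  let ?below = "\<lambda>\<omega>. {j. j < i \<and> Z \<omega> j < Z \<omega> i}"
  have as_sum: "dlt_parent (Z \<omega>) i =
      (\<Sum>S\<in>Pow {..<i}. if ?below \<omega> = S then Max ((\<lambda>j. Z \<omega> j) ` S) else 0)" for \<omega>
  proof -
    have "dlt_parent (Z \<omega>) i = Max ((\<lambda>j. Z \<omega> j) ` ?below \<omega>)"
      unfolding dlt_parent_def by (rule arg_cong[where f = Max]) auto
    then show ?thesis by (subst sum.delta') auto
  qed
  have [measurable]: "{\<omega> \<in> space N. ?below \<omega> = S} \<in> sets N" for S
  proof -
    have "{\<omega> \<in> space N. ?below \<omega> = S} =
          {\<omega> \<in> space N. \<forall>j\<in>{..<i}. (Z \<omega> j < Z \<omega> i) = (j \<in> S)} \<inter> {\<omega> \<in> space N. S \<subseteq> {..<i}}"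
      by auto
    also have "\<dots> \<in> sets N" using Z by measurable
    finally show ?thesis .
  qed
  have [measurable]: "(\<lambda>\<omega>. Max ((\<lambda>j. Z \<omega> j) ` S)) \<in> borel_measurable N" if "S \<in> Pow {..<i}" for S
    using that Z by (intro borel_measurable_Max[where f = "\<lambda>j \<omega>. Z \<omega> j"]) (auto intro: finite_subset)
  show ?thesis
    unfolding as_sum by (intro borel_measurable_sum measurable_If) auto
qed

lemma measurable_L0:
  assumes Z: "\<And>j. (\<lambda>\<omega>. Z \<omega> j) \<in> borel_measurable N"
  shows "(\<lambda>\<omega>. L0 a (Z \<omega>) m) \<in> borel_measurable N"
proof -
  have [measurable]: "(\<lambda>\<omega>. dlt_parent (Z \<omega>) i) \<in> borel_measurable N" "(\<lambda>\<omega>. Z \<omega> i) \<in> borel_measurable N"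
    for i using Z by (auto intro: measurable_dlt_parent)
  show ?thesis unfolding L0_def by measurable
qed

section \<open>The uniform distribution on (0,1]\<close>

definition unif01 :: "real measure" where
  "unif01 = density lborel (\<lambda>x. ennreal (indicator {0<..1} x))"

lemma sets_unif01 [simp, measurable_cong]: "sets unif01 = sets borel"
  by (simp add: unif01_def)

lemma space_unif01 [simp]: "space unif01 = UNIV"
  by (simp add: unif01_def)

lemma prob_space_unif01: "prob_space unif01"
proof
  have "emeasure unif01 (space unif01) = (\<integral>\<^sup>+ x. indicator {0<..1::real} x \<partial>lborel)"
    unfolding unif01_def
    by (subst emeasure_density) (auto simp: ennreal_indicator intro!: nn_integral_cong)
  then show "emeasure unif01 (space unif01) = 1" by simp
qed

interpretation unif01: prob_space unif01
  by (rule prob_space_unif01)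

lemma uniform_measure_eq_unif01: "uniform_measure lborel {0<..<1::real} = unif01"
proof -
  have "AE x in lborel. indicator {0<..<1::real} x / emeasure lborel {0<..<1::real} =
                        ennreal (indicator {0<..1} x)"
    using AE_lborel_singleton[of "1::real"] by eventually_elim (auto simp: indicator_def)
  then show ?thesis
    unfolding uniform_measure_def unif01_def by (intro density_cong) auto
qed

lemma AE_unif01: "AE x in unif01. 0 < x \<and> x \<le> 1"
  unfolding unif01_def by (subst AE_density) (auto simp: indicator_def)

lemma integral_unif01:
  fixes f :: "real \<Rightarrow> 'b::{banach, second_countable_topology}"
  assumes "f \<in> borel_measurable borel"
  shows "integral\<^sup>L unif01 f = (\<integral>x. indicator {0<..1} x *\<^sub>R f x \<partial>lborel)"
  unfolding unif01_def using assms by (subst integral_density) auto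

lemma integrable_unif01_bounded:
  fixes f :: "real \<Rightarrow> 'b::{banach, second_countable_topology}"
  assumes "f \<in> borel_measurable borel" and "\<And>x. 0 < x \<Longrightarrow> x \<le> 1 \<Longrightarrow> norm (f x) \<le> B"
  shows "integrable unif01 f"
proof (rule unif01.integrable_const_bound)
  show "AE x in unif01. norm (f x) \<le> B"
    using AE_unif01 by eventually_elim (use assms in auto)
qed (use assms in simp)

lemma integral_unif01_powr_below:
  assumes "0 \<le> s" "s \<le> 1" and "0 < p"
  shows "(\<integral>x. (if x \<le> s then x powr p else 0) \<partial>unif01) = s powr (p + 1) / (p + 1)"
proof -
  have "(\<integral>x. (if x \<le> s then x powr p else 0) \<partial>unif01) = (\<integral>x. indicator {0..s} x *\<^sub>R x powr p \<partial>lborel)"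
    using assms by (subst integral_unif01) (auto intro!: Bochner_Integration.integral_cong simp: indicator_def)
  also have "\<dots> = integral {0..s} (\<lambda>x. x powr p)"
  proof (rule set_borel_integral_eq_integral(2)[unfolded set_lebesgue_integral_def])
    show "set_integrable lborel {0..s} (\<lambda>x. x powr p)"
      using assms by (intro borel_integrable_atLeastAtMost' continuous_on_powr') (auto intro!: continuous_intros)
  qed
  also have "\<dots> = s powr (p + 1) / (p + 1)"
    using assms by (intro integral_unique has_integral_powr_from_0) auto
  finally show ?thesis .
qed

lemma integral_unif01_above:
  fixes c :: "'b::{banach, second_countable_topology}"
  assumes "0 \<le> s" "s \<le> 1"
  shows "(\<integral>x. (if x \<le> s then 0 else c) \<partial>unif01) = (1 - s) *\<^sub>R c"
proof -
  have "(\<integral>x. (if x \<le> s then 0 else c) \<partial>unif01) = (\<integral>x. indicator {s<..1} x *\<^sub>R c \<partial>lborel)"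
    using assms by (subst integral_unif01) (auto intro!: Bochner_Integration.integral_cong simp: indicator_def)
  also have "\<dots> = (1 - s) *\<^sub>R c"
    using assms by (simp add: measure_def)
  finally show ?thesis .
qed

lemma integrable_unif01_split:
  assumes "0 \<le> p"
  shows "integrable unif01 (\<lambda>x. if x \<le> s then c * x powr p else d)"
proof (rule integrable_unif01_bounded[where B = "\<bar>c\<bar> + \<bar>d\<bar>"])
  fix x :: real assume "0 < x" "x \<le> 1"
  then have "\<bar>c\<bar> * x powr p \<le> \<bar>c\<bar>"
    using assms by (intro mult_left_le powr_le1) auto
  then show "norm (if x \<le> s then c * x powr p else d) \<le> \<bar>c\<bar> + \<bar>d\<bar>"
    by (auto simp: abs_mult)
qed simp

lemma integral_unif01_split:
  assumes "0 \<le> s" "s \<le> 1" and "0 < p"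
  shows "(\<integral>x. (if x \<le> s then c * x powr p else d) \<partial>unif01) = c * (s powr (p + 1) / (p + 1)) + d * (1 - s)"
proof -
  have below: "integrable unif01 (\<lambda>x. if x \<le> s then x powr p else 0)"
    using assms by (intro integrable_unif01_bounded[where B = 1]) (auto intro: powr_le1)
  have above: "integrable unif01 (\<lambda>x. if x \<le> s then 0 else d)"
    by (intro integrable_unif01_bounded[where B = "\<bar>d\<bar>"]) auto
  have "(\<integral>x. (if x \<le> s then c * x powr p else d) \<partial>unif01) =
        (\<integral>x. c * (if x \<le> s then x powr p else 0) + (if x \<le> s then 0 else d) \<partial>unif01)"
    by (intro Bochner_Integration.integral_cong) auto
  also have "\<dots> = c * (\<integral>x. (if x \<le> s then x powr p else 0) \<partial>unif01) + (\<integral>x. (if x \<le> s then 0 else d) \<partial>unif01)"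
    using below above by simp
  finally show ?thesis
    using assms by (simp add: integral_unif01_powr_below integral_unif01_above)
qed

lemma integral_unif01_scale:
  fixes f :: "real \<Rightarrow> 'b::{banach, second_countable_topology}"
  assumes f: "(\<lambda>x. if x \<le> c * y then f x else 0) \<in> borel_measurable borel"
    and c: "0 < c" "c \<le> 1" and y: "0 \<le> y" "y \<le> 1"
  shows "(\<integral>x. (if x \<le> c * y then f x else 0) \<partial>unif01) = c *\<^sub>R (\<integral>z. (if z \<le> y then f (c * z) else 0) \<partial>unif01)"
proof -
  have rescaled: "(\<lambda>z. if z \<le> y then f (c * z) else 0) = (\<lambda>z. (\<lambda>x. if x \<le> c * y then f x else 0) (c * z))"
    using c by auto
  have [measurable]: "(\<lambda>z. if z \<le> y then f (c * z) else 0) \<in> borel_measurable borel"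
    unfolding rescaled by (rule measurable_compose[OF _ f]) simp
  have "c * y \<le> 1" using c y by (simp add: mult_le_one)
  then have "(\<integral>x. (if x \<le> c * y then f x else 0) \<partial>unif01) = (\<integral>x. indicator {0<..c * y} x *\<^sub>R f x \<partial>lborel)"
    using f by (subst integral_unif01) (auto intro!: Bochner_Integration.integral_cong simp: indicator_def)
  also have "\<dots> = c *\<^sub>R (\<integral>z. indicator {0<..c * y} (0 + c * z) *\<^sub>R f (0 + c * z) \<partial>lborel)"
    using c by (subst lborel_integral_real_affine[where c = c and t = 0]) auto
  also have "(\<integral>z. indicator {0<..c * y} (0 + c * z) *\<^sub>R f (0 + c * z) \<partial>lborel) =
             (\<integral>z. indicator {0<..1} z *\<^sub>R (if z \<le> y then f (c * z) else 0) \<partial>lborel)"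
    using c y by (intro Bochner_Integration.integral_cong) (auto simp: indicator_def zero_less_mult_iff)
  also have "\<dots> = (\<integral>z. (if z \<le> y then f (c * z) else 0) \<partial>unif01)"
    by (subst integral_unif01) auto
  finally show ?thesis .
qed

text \<open>Each application of the equation improves a bound K y^a on the norm of d by the factor
  1/(a+1).\<close>
lemma unif01_volterra_eq_0:
  fixes d e :: "real \<Rightarrow> 'b::{banach, second_countable_topology, real_normed_algebra}"
  assumes a: "0 < a"
    and eq: "\<And>y. 0 \<le> y \<Longrightarrow> y \<le> 1 \<Longrightarrow> y *\<^sub>R d y = (\<integral>x. (if x \<le> y then e x * d x else 0) \<partial>unif01)"
    and int: "\<And>y. 0 \<le> y \<Longrightarrow> y \<le> 1 \<Longrightarrow> integrable unif01 (\<lambda>x. if x \<le> y then e x * d x else 0)"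
    and e: "\<And>x. norm (e x) \<le> 1"
    and bound: "\<And>y. 0 \<le> y \<Longrightarrow> y \<le> 1 \<Longrightarrow> norm (d y) \<le> K * y powr a"
    and y: "0 \<le> y" "y \<le> 1"
  shows "d y = 0"
proof -
  have improved: "norm (d y) \<le> K / (a + 1) ^ k * y powr a" if "0 \<le> y" "y \<le> 1" for k y
    using that
  proof (induction k arbitrary: y)
    case 0
    then show ?case using bound by simp
  next
    case (Suc k y)
    define Kk where "Kk = K / (a + 1) ^ k"
    have "y * norm (d y) = norm (\<integral>x. (if x \<le> y then e x * d x else 0) \<partial>unif01)"
      using Suc.prems by (simp flip: eq)
    also have "\<dots> \<le> (\<integral>x. norm (if x \<le> y then e x * d x else 0) \<partial>unif01)"
      by (rule integral_norm_bound)
    also have "\<dots> \<le> (\<integral>x. (if x \<le> y then Kk * x powr a else 0) \<partial>unif01)"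
    proof (rule integral_mono_AE)
      show "integrable unif01 (\<lambda>x. norm (if x \<le> y then e x * d x else 0))"
        using int[OF Suc.prems] by (rule integrable_norm)
      show "integrable unif01 (\<lambda>x. if x \<le> y then Kk * x powr a else 0)"
        using a by (intro integrable_unif01_split) simp
      show "AE x in unif01. norm (if x \<le> y then e x * d x else 0) \<le> (if x \<le> y then Kk * x powr a else 0)"
        using AE_unif01
      proof eventually_elim
        case (elim x)
        have "norm (e x * d x) \<le> norm (d x)"
          by (rule order.trans[OF norm_mult_ineq]) (use e[of x] in \<open>simp add: mult_left_le_one_le\<close>)
        then show ?case
          using Suc.IH[of x] Suc.prems elim by (auto simp: Kk_def)
      qed
    qed
    also have "\<dots> = Kk * (y powr (a + 1) / (a + 1))"
      using integral_unif01_split[of y a Kk 0] Suc.prems a by simp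
    also have "\<dots> = y * (Kk / (a + 1) * y powr a)"
      using Suc.prems by (cases "y = 0") (simp_all add: powr_add)
    finally have "y * norm (d y) \<le> y * (Kk / (a + 1) * y powr a)" .
    then have "norm (d y) \<le> Kk / (a + 1) * y powr a" if "y \<noteq> 0"
      using that Suc.prems mult_left_le_imp_le[of y "norm (d y)" "Kk / (a + 1) * y powr a"] by simp
    then show ?case
      using bound[of 0] Suc.prems by (cases "y = 0") (auto simp: Kk_def field_simps)
  qed
  have "(\<lambda>k. K * (1 / (a + 1)) ^ k * y powr a) \<longlonglongrightarrow> K * 0 * y powr a"
    using a by (intro tendsto_intros LIMSEQ_power_zero) auto
  then have "(\<lambda>k. K / (a + 1) ^ k * y powr a) \<longlonglongrightarrow> 0"
    by (simp add: power_one_over divide_inverse power_inverse)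
  then have "norm (d y) \<le> 0"
    by (rule LIMSEQ_le_const) (use improved y in auto)
  then show ?thesis by simp
qed

section \<open>Record sums of independent uniforms\<close>

locale uniform_seq = prob_space M for M :: "'a measure" +
  fixes X :: "nat \<Rightarrow> 'a \<Rightarrow> real"
  assumes indep_X: "indep_vars (\<lambda>_. borel) X {1..}"
    and distributed_X: "\<And>i. 1 \<le> i \<Longrightarrow> distributed M lborel (X i) (\<lambda>x. ennreal (indicator {0<..1} x))"
begin

lemma measurable_X [measurable]: "1 \<le> i \<Longrightarrow> X i \<in> borel_measurable M"
  using distributed_measurable[OF distributed_X] by (simp add: measurable_def)

lemma distr_X: "1 \<le> i \<Longrightarrow> distr M borel (X i) = unif01"
proof -
  assume i: "1 \<le> i"
  have "distr M borel (X i) = distr M lborel (X i)"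
    using i by (intro distr_cong_AE) auto
  also have "\<dots> = unif01"
    unfolding unif01_def by (rule distributed_distr_eq_density[OF distributed_X[OF i]])
  finally show ?thesis .
qed

lemma AE_X_in_unit: "AE \<omega> in M. \<forall>i\<ge>1. 0 < X i \<omega> \<and> X i \<omega> \<le> 1"
proof -
  have "AE \<omega> in M. 0 < X i \<omega> \<and> X i \<omega> \<le> 1" if "1 \<le> i" for i
    using AE_unif01 that by (subst (asm) distr_X[OF that, symmetric]) (simp add: AE_distr_iff)
  then show ?thesis
    by (subst AE_all_countable) (auto intro: AE_mp[OF AE_I2])
qed

text \<open>X with the null set where some X i leaves (0,1] removed by hand, so that bounds on record
  sums hold pointwise.\<close>
definition U :: "nat \<Rightarrow> 'a \<Rightarrow> real" where
  "U i \<omega> = (if 1 \<le> i \<and> 0 < X i \<omega> \<and> X i \<omega> \<le> 1 then X i \<omega> else 1)"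

lemma U_pos: "0 < U i \<omega>" and U_le_1: "U i \<omega> \<le> 1"
  by (auto simp: U_def)

lemma measurable_U [measurable]: "U i \<in> borel_measurable M"
  by (cases "1 \<le> i") (simp_all add: U_def[abs_def])

lemma AE_U_eq_X: "AE \<omega> in M. \<forall>i\<ge>1. U i \<omega> = X i \<omega>"
  using AE_X_in_unit by eventually_elim (auto simp: U_def)

lemma distr_U:
  assumes "1 \<le> i"
  shows "distr M borel (U i) = unif01"
proof -
  have "distr M borel (U i) = distr M borel (X i)"
    using AE_U_eq_X assms by (intro distr_cong_AE) auto
  then show ?thesis using distr_X[OF assms] by simp
qed

lemma indep_U: "indep_vars (\<lambda>_. borel) U {1..}"
proof -
  have "indep_vars (\<lambda>_. borel) (\<lambda>i \<omega>. (\<lambda>y. if 0 < y \<and> y \<le> 1 then y else 1) (X i \<omega>)) {1..}"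
    by (rule indep_vars_compose2[OF indep_X]) measurable
  then show ?thesis
    by (rule indep_vars_cong[THEN iffD1, rotated -1]) (auto simp: U_def fun_eq_iff)
qed

lemma integral_indep_coordinate:
  fixes g :: "real \<times> (nat \<Rightarrow> real) \<Rightarrow> 'b::{banach, second_countable_topology}"
  assumes k: "1 \<le> k" and J: "J \<subseteq> {1..}" "k \<notin> J"
    and g [measurable]: "g \<in> borel_measurable (borel \<Otimes>\<^sub>M PiM J (\<lambda>_. borel))"
    and int: "integrable M (\<lambda>\<omega>. g (U k \<omega>, restrict (\<lambda>i. U i \<omega>) J))"
  shows "(\<integral>\<omega>. g (U k \<omega>, restrict (\<lambda>i. U i \<omega>) J) \<partial>M) =
         (\<integral>x. (\<integral>\<omega>. g (x, restrict (\<lambda>i. U i \<omega>) J) \<partial>M) \<partial>unif01)"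
    and "integrable unif01 (\<lambda>x. \<integral>\<omega>. g (x, restrict (\<lambda>i. U i \<omega>) J) \<partial>M)"
proof -
  \<comment> \<open>indep_var needs both variables to take values in the same type, so U k enters as the
    restriction of U to {k}.\<close>
  define R where "R = (\<lambda>\<omega>. restrict (\<lambda>i. U i \<omega>) {k})"
  define Y where "Y = (\<lambda>\<omega>. restrict (\<lambda>i. U i \<omega>) J)"
  define PR where "PR = distr M (PiM {k} (\<lambda>_. borel)) R"
  define PY where "PY = distr M (PiM J (\<lambda>_. borel)) Y"
  define G where "G = (\<lambda>(f :: nat \<Rightarrow> real, y). g (f k, y))"
  define \<phi> where "\<phi> = (\<lambda>x. \<integral>\<omega>. g (x, Y \<omega>) \<partial>M)"
  have [measurable]: "R \<in> measurable M (PiM {k} (\<lambda>_. borel))" "Y \<in> measurable M (PiM J (\<lambda>_. borel))"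
    unfolding R_def Y_def by measurable
  have [measurable]: "G \<in> borel_measurable (PiM {k} (\<lambda>_. borel) \<Otimes>\<^sub>M PiM J (\<lambda>_. borel))"
    unfolding G_def by measurable
  interpret PR: prob_space PR
    unfolding PR_def by (rule prob_space_distr) simp
  interpret PY: prob_space PY
    unfolding PY_def by (rule prob_space_distr) simp
  interpret P: pair_prob_space PR PY ..
  have "indep_var (PiM {k} (\<lambda>_. borel)) R (PiM J (\<lambda>_. borel)) Y"
    unfolding R_def Y_def using k J by (intro indep_var_restrict[OF indep_U]) auto
  then have joint: "PR \<Otimes>\<^sub>M PY = distr M (PiM {k} (\<lambda>_. borel) \<Otimes>\<^sub>M PiM J (\<lambda>_. borel)) (\<lambda>\<omega>. (R \<omega>, Y \<omega>))"
    unfolding indep_var_distribution_eq PR_def PY_def by simp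
  have PR: "PR = distr unif01 (PiM {k} (\<lambda>_. borel)) (\<lambda>x. \<lambda>i\<in>{k}. x)"
  proof -
    have "R = (\<lambda>x. \<lambda>i\<in>{k}. x) \<circ> U k"
      by (auto simp: R_def fun_eq_iff restrict_def)
    then show ?thesis
      unfolding PR_def distr_U[OF k, symmetric] by (subst distr_distr) auto
  qed
  have G_R: "G (R \<omega>, y) = g (U k \<omega>, y)" for \<omega> y
    by (simp add: G_def R_def)
  have int_G: "integrable (PR \<Otimes>\<^sub>M PY) G"
    unfolding joint using int by (subst integrable_distr_eq) (auto simp: G_R Y_def)
  have inner: "(\<integral>y. G (f, y) \<partial>PY) = \<phi> (f k)" for f
    unfolding PY_def \<phi>_def G_def by (subst integral_distr) auto
  have int_outer: "integrable PR (\<lambda>f. \<phi> (f k))"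
    using P.integrable_fst'[OF int_G] by (simp add: inner)
  have [measurable]: "(\<lambda>f. \<phi> (f k)) \<in> borel_measurable (PiM {k} (\<lambda>_. borel))"
    using borel_measurable_integrable[OF int_outer] by (simp add: PR_def)
  have "(\<integral>\<omega>. g (U k \<omega>, Y \<omega>) \<partial>M) = integral\<^sup>L (PR \<Otimes>\<^sub>M PY) G"
    unfolding joint by (subst integral_distr) (auto simp: G_R)
  also have "\<dots> = (\<integral>f. \<phi> (f k) \<partial>PR)"
    using P.integral_fst'[OF int_G] by (simp add: inner)
  also have "\<dots> = (\<integral>x. \<phi> x \<partial>unif01)"
    unfolding PR by (subst integral_distr) auto
  finally show "(\<integral>\<omega>. g (U k \<omega>, restrict (\<lambda>i. U i \<omega>) J) \<partial>M) =
                (\<integral>x. (\<integral>\<omega>. g (x, restrict (\<lambda>i. U i \<omega>) J) \<partial>M) \<partial>unif01)"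
    by (simp add: \<phi>_def Y_def)
  show "integrable unif01 (\<lambda>x. \<integral>\<omega>. g (x, restrict (\<lambda>i. U i \<omega>) J) \<partial>M)"
    using int_outer unfolding PR by (subst (asm) integrable_distr_eq) (auto simp: \<phi>_def Y_def)
qed

end

lemma power2_add_le_weighted:
  fixes a b c :: real
  assumes "0 < c"
  shows "(a + b)\<^sup>2 \<le> (1 + 1 / c) * a\<^sup>2 + (1 + c) * b\<^sup>2"
proof -
  have "0 \<le> (a / sqrt c - sqrt c * b)\<^sup>2" by simp
  also have "\<dots> = a\<^sup>2 / c - 2 * a * b + c * b\<^sup>2"
    using assms by (simp add: power2_eq_square field_simps)
  finally show ?thesis by (simp add: power2_eq_square field_simps)
qed

text \<open>The characteristic function at t of the record sum with threshold s of m independent uniforms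
  (integral_iexp_rsum), computed by conditioning on the first of them.\<close>
primrec record_char :: "real \<Rightarrow> real \<Rightarrow> nat \<Rightarrow> real \<Rightarrow> complex" where
  "record_char a t 0 s = 1"
| "record_char a t (Suc m) s =
     (\<integral>x. (if x \<le> s then iexp (t * x powr a) * record_char a t m x else record_char a t m s) \<partial>unif01)"

lemma measurable_record_char [measurable]: "record_char a t m \<in> borel_measurable borel"
proof (induction m)
  case 0
  then show ?case by simp
next
  case (Suc m)
  have [measurable]: "record_char a t m \<in> borel_measurable borel"
    by (fact Suc.IH)
  have "(\<lambda>(s, x). if x \<le> s then iexp (t * x powr a) * record_char a t m x else record_char a t m s)
          \<in> borel_measurable (borel \<Otimes>\<^sub>M unif01)"
    by (subst measurable_cong_sets[OF sets_pair_measure_cong[OF refl sets_unif01] refl]) measurable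
  then show ?case
    unfolding record_char.simps by (rule unif01.borel_measurable_lebesgue_integral)
qed

lemma norm_record_char_le: "norm (record_char a t m s) \<le> 1"
proof (induction m arbitrary: s)
  case 0
  then show ?case by simp
next
  case (Suc m)
  let ?f = "\<lambda>x. if x \<le> s then iexp (t * x powr a) * record_char a t m x else record_char a t m s"
  have "norm (record_char a t (Suc m) s) \<le> (\<integral>x. norm (?f x) \<partial>unif01)"
    unfolding record_char.simps by (rule integral_norm_bound)
  also have "\<dots> \<le> (\<integral>x. 1 \<partial>unif01)"
    using Suc.IH by (intro integral_mono integrable_unif01_bounded[where B = 1])
      (auto simp: norm_mult norm_exp_i_times)
  finally show ?case by (simp add: unif01.prob_space[unfolded space_unif01])
qed

locale uniform_records = uniform_seq +
  fixes \<alpha> :: real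
  assumes alpha_pos: "0 < \<alpha>"
begin

abbreviation rsum :: "real \<Rightarrow> nat \<Rightarrow> nat \<Rightarrow> 'a \<Rightarrow> real" where
  "rsum s n m \<omega> \<equiv> record_sum \<alpha> s (\<lambda>i. U i \<omega>) n m"

lemma rsum_le: "rsum s n m \<omega> \<le> m"
  using alpha_pos U_pos U_le_1 by (intro record_sum_le) (auto intro: less_imp_le)

lemma measurable_rsum [measurable]: "rsum s n m \<in> borel_measurable M"
  by (rule measurable_record_sum) auto

lemma integrable_rsum_comp:
  fixes F :: "real \<Rightarrow> 'b::{banach, second_countable_topology}"
  assumes [measurable]: "F \<in> borel_measurable borel"
    and "\<And>r. 0 \<le> r \<Longrightarrow> r \<le> m \<Longrightarrow> norm (F r) \<le> B"
  shows "integrable M (\<lambda>\<omega>. F (rsum s n m \<omega>))"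
  using assms(2) by (intro integrable_const_bound[where B = B]) (auto intro!: record_sum_nonneg rsum_le)

lemma integrable_rsum: "integrable M (rsum s n m)"
  using integrable_rsum_comp[where F = "\<lambda>r. r" and B = m] by simp

lemma integrable_rsum_square: "integrable M (\<lambda>\<omega>. (rsum s n m \<omega>)\<^sup>2)"
  using integrable_rsum_comp[where F = "\<lambda>r. r\<^sup>2" and B = "m\<^sup>2"] by (simp add: power_mono)

lemma integral_rsum_Suc:
  fixes F :: "real \<Rightarrow> 'b::{banach, second_countable_topology}" and s :: real and n m :: nat
  assumes F [measurable]: "F \<in> borel_measurable borel"
    and F_bounded: "\<And>r. 0 \<le> r \<Longrightarrow> r \<le> real (Suc m) \<Longrightarrow> norm (F r) \<le> B"
  defines "\<phi> \<equiv> \<lambda>x. if x \<le> s then (\<integral>\<omega>. F (x powr \<alpha> + rsum x (Suc n) m \<omega>) \<partial>M)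
                   else (\<integral>\<omega>. F (rsum s (Suc n) m \<omega>) \<partial>M)"
  shows "(\<integral>\<omega>. F (rsum s n (Suc m) \<omega>) \<partial>M) = integral\<^sup>L unif01 \<phi>"
    and "integrable unif01 \<phi>"
proof -
  define J where "J = {Suc (Suc n)..Suc n + m}"
  define g where "g = (\<lambda>(x, y). F (if x \<le> s then x powr \<alpha> + record_sum \<alpha> x y (Suc n) m
                                 else record_sum \<alpha> s y (Suc n) m))"
  have J: "J \<subseteq> {1..}" "Suc n \<notin> J" by (auto simp: J_def)
  let ?N = "borel \<Otimes>\<^sub>M PiM J (\<lambda>_. borel)"
  have coordinate: "(\<lambda>p. snd p i) \<in> borel_measurable ?N" if "i \<in> J" for i
    using that by measurable
  have [measurable]: "(\<lambda>p. record_sum \<alpha> (T p) (snd p) (Suc n) m) \<in> borel_measurable ?N"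
    if "T \<in> borel_measurable ?N" for T
    using that by (rule measurable_record_sum) (use coordinate in \<open>auto simp: J_def\<close>)
  have "g \<in> borel_measurable ?N"
    unfolding g_def by (simp add: case_prod_beta') measurable
  moreover have restrict: "record_sum \<alpha> t (restrict (\<lambda>i. U i \<omega>) J) (Suc n) m = rsum t (Suc n) m \<omega>" for t \<omega>
    by (rule record_sum_cong) (auto simp: J_def)
  then have g_U: "F (rsum s n (Suc m) \<omega>) = g (U (Suc n) \<omega>, restrict (\<lambda>i. U i \<omega>) J)" for \<omega>
    by (simp add: g_def record_sum_Suc)
  moreover have "integrable M (\<lambda>\<omega>. g (U (Suc n) \<omega>, restrict (\<lambda>i. U i \<omega>) J))"
    unfolding g_U[symmetric] using F_bounded by (intro integrable_rsum_comp) auto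
  moreover have "(\<integral>\<omega>. g (x, restrict (\<lambda>i. U i \<omega>) J) \<partial>M) = \<phi> x" for x
    by (simp add: g_def restrict \<phi>_def)
  ultimately show "(\<integral>\<omega>. F (rsum s n (Suc m) \<omega>) \<partial>M) = integral\<^sup>L unif01 \<phi>"
    and "integrable unif01 \<phi>"
    using integral_indep_coordinate[of "Suc n" J g] J by (simp_all add: g_U)
qed

lemma expectation_rsum_le:
  assumes "0 \<le> s" "s \<le> 1"
  shows "(\<integral>\<omega>. rsum s n m \<omega> \<partial>M) \<le> s powr \<alpha> / \<alpha>"
  using assms
proof (induction m arbitrary: n s)
  case 0
  then show ?case using alpha_pos by simp
next
  case (Suc m)
  let ?\<phi> = "\<lambda>x. if x \<le> s then (\<integral>\<omega>. x powr \<alpha> + rsum x (Suc n) m \<omega> \<partial>M)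
                 else (\<integral>\<omega>. rsum s (Suc n) m \<omega> \<partial>M)"
  note step = integral_rsum_Suc[where F = "\<lambda>r. r" and B = "Suc m" and s = s and n = n and m = m]
  have bound: "?\<phi> x \<le> (if x \<le> s then (1 + 1 / \<alpha>) * x powr \<alpha> else s powr \<alpha> / \<alpha>)" if "0 < x" for x
  proof (cases "x \<le> s")
    case True
    have "(\<integral>\<omega>. x powr \<alpha> + rsum x (Suc n) m \<omega> \<partial>M) = x powr \<alpha> + (\<integral>\<omega>. rsum x (Suc n) m \<omega> \<partial>M)"
      using integrable_rsum by (simp add: prob_space)
    also have "\<dots> \<le> (1 + 1 / \<alpha>) * x powr \<alpha>"
      using Suc.IH[of x "Suc n"] True Suc.prems that by (simp add: algebra_simps)
    finally show ?thesis using True by simp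
  next
    case False
    then show ?thesis using Suc.IH[of s "Suc n"] Suc.prems by simp
  qed
  have "integral\<^sup>L unif01 ?\<phi> \<le> (\<integral>x. (if x \<le> s then (1 + 1 / \<alpha>) * x powr \<alpha> else s powr \<alpha> / \<alpha>) \<partial>unif01)"
  proof (rule integral_mono_AE[OF step(2)])
    show "AE x in unif01. ?\<phi> x \<le> (if x \<le> s then (1 + 1 / \<alpha>) * x powr \<alpha> else s powr \<alpha> / \<alpha>)"
      using AE_unif01 by eventually_elim (use bound in auto)
  qed (use alpha_pos in \<open>auto intro: integrable_unif01_split\<close>)
  also have "\<dots> = (1 + 1 / \<alpha>) * (s powr (\<alpha> + 1) / (\<alpha> + 1)) + s powr \<alpha> / \<alpha> * (1 - s)"
    using Suc.prems alpha_pos by (intro integral_unif01_split) auto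
  also have "\<dots> = s powr \<alpha> / \<alpha>"
  proof -
    have "(1 + 1 / \<alpha>) * (s powr (\<alpha> + 1) / (\<alpha> + 1)) = s * s powr \<alpha> / \<alpha>"
      using Suc.prems alpha_pos by (simp add: powr_add divide_simps)
    then show ?thesis by (simp add: algebra_simps diff_divide_distrib)
  qed
  finally show ?case
    using step(1) by simp
qed

lemma second_moment_rsum_le:
  assumes "0 \<le> s" "s \<le> 1"
  shows "(\<integral>\<omega>. (rsum s n m \<omega>)\<^sup>2 \<partial>M) \<le> (1 + 1 / \<alpha>) / \<alpha> * s powr (2 * \<alpha>)"
  using assms
proof (induction m arbitrary: n s)
  case 0
  then show ?case using alpha_pos by simp
next
  case (Suc m)
  define C where "C = (1 + 1 / \<alpha>) / \<alpha>"
  define D where "D = (1 + 1 / \<alpha>) + (1 + \<alpha>) * C"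
  let ?\<phi> = "\<lambda>x. if x \<le> s then (\<integral>\<omega>. (x powr \<alpha> + rsum x (Suc n) m \<omega>)\<^sup>2 \<partial>M)
                 else (\<integral>\<omega>. (rsum s (Suc n) m \<omega>)\<^sup>2 \<partial>M)"
  note step = integral_rsum_Suc[where F = "\<lambda>r. r\<^sup>2" and B = "(Suc m)\<^sup>2" and s = s and n = n and m = m]
  have bound: "?\<phi> x \<le> (if x \<le> s then D * x powr (2 * \<alpha>) else C * s powr (2 * \<alpha>))" if x: "0 < x" "x \<le> 1" for x
  proof (cases "x \<le> s")
    case True
    have "x powr \<alpha> \<le> 1" using x alpha_pos by (intro powr_le1) auto
    then have "integrable M (\<lambda>\<omega>. (x powr \<alpha> + rsum x (Suc n) m \<omega>)\<^sup>2)"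
      by (intro integrable_rsum_comp[where B = "(1 + m)\<^sup>2"]) (auto intro!: power_mono)
    moreover have "(x powr \<alpha> + r)\<^sup>2 \<le> (1 + 1 / \<alpha>) * x powr (2 * \<alpha>) + (1 + \<alpha>) * r\<^sup>2" for r
      using power2_add_le_weighted[OF alpha_pos, of "x powr \<alpha>" r] x
      by (simp add: powr_powr mult.commute flip: powr_realpow)
    ultimately have "(\<integral>\<omega>. (x powr \<alpha> + rsum x (Suc n) m \<omega>)\<^sup>2 \<partial>M)
        \<le> (\<integral>\<omega>. (1 + 1 / \<alpha>) * x powr (2 * \<alpha>) + (1 + \<alpha>) * (rsum x (Suc n) m \<omega>)\<^sup>2 \<partial>M)"
      using integrable_rsum_square by (intro integral_mono) auto
    also have "\<dots> = (1 + 1 / \<alpha>) * x powr (2 * \<alpha>) + (1 + \<alpha>) * (\<integral>\<omega>. (rsum x (Suc n) m \<omega>)\<^sup>2 \<partial>M)"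
      using integrable_rsum_square by (simp add: prob_space)
    also have "\<dots> \<le> (1 + 1 / \<alpha>) * x powr (2 * \<alpha>) + (1 + \<alpha>) * (C * x powr (2 * \<alpha>))"
      using Suc.IH[of x "Suc n"] x alpha_pos unfolding C_def by (intro add_left_mono mult_left_mono) auto
    also have "\<dots> = D * x powr (2 * \<alpha>)"
      by (simp add: D_def algebra_simps)
    finally show ?thesis using True by simp
  next
    case False
    then show ?thesis using Suc.IH[of s "Suc n"] Suc.prems by (simp add: C_def)
  qed
  have "integral\<^sup>L unif01 ?\<phi> \<le> (\<integral>x. (if x \<le> s then D * x powr (2 * \<alpha>) else C * s powr (2 * \<alpha>)) \<partial>unif01)"
  proof (rule integral_mono_AE[OF step(2)])
    show "AE x in unif01. ?\<phi> x \<le> (if x \<le> s then D * x powr (2 * \<alpha>) else C * s powr (2 * \<alpha>))"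
      using AE_unif01 by eventually_elim (use bound in auto)
  qed (use alpha_pos in \<open>auto intro: integrable_unif01_split power_mono\<close>)
  also have "\<dots> = D * (s powr (2 * \<alpha> + 1) / (2 * \<alpha> + 1)) + C * s powr (2 * \<alpha>) * (1 - s)"
    using Suc.prems alpha_pos by (intro integral_unif01_split) auto
  also have "\<dots> = C * s powr (2 * \<alpha>)"
  proof -
    have "D = C * (2 * \<alpha> + 1)"
      using alpha_pos by (simp add: C_def D_def field_simps)
    then show ?thesis
      using Suc.prems alpha_pos by (simp add: powr_add field_simps)
  qed
  finally show ?case
    using step(1) by (simp add: C_def power_mono)
qed

lemma integral_iexp_rsum: "(\<integral>\<omega>. iexp (t * rsum s n m \<omega>) \<partial>M) = record_char \<alpha> t m s"
proof (induction m arbitrary: n s)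
  case 0
  then show ?case by (simp add: prob_space)
next
  case (Suc m)
  have shifted: "(\<integral>\<omega>. iexp (t * (x powr \<alpha> + rsum x (Suc n) m \<omega>)) \<partial>M) =
                 iexp (t * x powr \<alpha>) * record_char \<alpha> t m x" for x
    using Suc.IH[of x "Suc n"] by (simp add: distrib_left exp_add algebra_simps)
  have "(\<integral>\<omega>. iexp (t * rsum s n (Suc m) \<omega>) \<partial>M) =
        (\<integral>x. (if x \<le> s then (\<integral>\<omega>. iexp (t * (x powr \<alpha> + rsum x (Suc n) m \<omega>)) \<partial>M)
                        else (\<integral>\<omega>. iexp (t * rsum s (Suc n) m \<omega>) \<partial>M)) \<partial>unif01)"
    by (rule integral_rsum_Suc[where B = 1]) (auto simp: norm_exp_i_times)
  then show ?case
    by (simp only: shifted Suc.IH record_char.simps)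
qed

lemma norm_record_char_sub_1_le:
  assumes "0 \<le> s" "s \<le> 1"
  shows "norm (record_char \<alpha> t m s - 1) \<le> \<bar>t\<bar> * (s powr \<alpha> / \<alpha>)"
proof -
  have integrable: "integrable M (\<lambda>\<omega>. iexp (t * rsum s 0 m \<omega>))"
    by (intro integrable_rsum_comp[where B = 1]) (auto simp: norm_exp_i_times)
  have "norm (record_char \<alpha> t m s - 1) = norm (\<integral>\<omega>. iexp (t * rsum s 0 m \<omega>) - 1 \<partial>M)"
    using integrable integral_iexp_rsum[of t s 0 m] by (simp add: prob_space)
  also have "\<dots> \<le> (\<integral>\<omega>. norm (iexp (t * rsum s 0 m \<omega>) - 1) \<partial>M)"
    by (rule integral_norm_bound)
  also have "\<dots> \<le> (\<integral>\<omega>. \<bar>t\<bar> * rsum s 0 m \<omega> \<partial>M)"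
  proof (rule integral_mono)
    show "integrable M (\<lambda>\<omega>. \<bar>t\<bar> * rsum s 0 m \<omega>)"
      using integrable_rsum by simp
    show "norm (iexp (t * rsum s 0 m \<omega>) - 1) \<le> \<bar>t\<bar> * rsum s 0 m \<omega>" for \<omega>
      using iexp_approx1[of "t * rsum s 0 m \<omega>" 0] by (simp add: abs_mult record_sum_nonneg)
  qed (use integrable in auto)
  also have "\<dots> \<le> \<bar>t\<bar> * (s powr \<alpha> / \<alpha>)"
    using mult_left_mono[OF expectation_rsum_le[OF assms, of 0 m], of "\<bar>t\<bar>"] by simp
  finally show ?thesis .
qed

section \<open>The limit and its characteristic function\<close>

definition record_sup :: "real \<Rightarrow> 'a \<Rightarrow> ennreal" where
  "record_sup s \<omega> = (SUP m. ennreal (rsum s 0 m \<omega>))"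

text \<open>enn2real sends an infinite supremum to 0; by AE_record_sup_finite this happens only on a null
  set.\<close>
definition record_lim :: "real \<Rightarrow> 'a \<Rightarrow> real" where
  "record_lim s \<omega> = enn2real (record_sup s \<omega>)"

lemma measurable_record_sup [measurable]: "record_sup s \<in> borel_measurable M"
  unfolding record_sup_def[abs_def] by measurable

lemma measurable_record_lim [measurable]: "record_lim s \<in> borel_measurable M"
  unfolding record_lim_def[abs_def] by measurable

lemma record_lim_nonneg: "0 \<le> record_lim s \<omega>"
  by (simp add: record_lim_def)

lemma incseq_rsum: "incseq (\<lambda>m. ennreal (rsum s n m \<omega>))"
  by (auto simp: incseq_def intro!: ennreal_leI record_sum_mono)

lemma nn_integral_SUP_rsum_le:
  fixes F :: "real \<Rightarrow> real"
  assumes [measurable]: "F \<in> borel_measurable borel"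
    and "mono_on {0..} F" "\<And>r. 0 \<le> r \<Longrightarrow> 0 \<le> F r"
    and "\<And>m. integrable M (\<lambda>\<omega>. F (rsum s 0 m \<omega>))" "\<And>m. (\<integral>\<omega>. F (rsum s 0 m \<omega>) \<partial>M) \<le> B"
  shows "(\<integral>\<^sup>+\<omega>. (SUP m. ennreal (F (rsum s 0 m \<omega>))) \<partial>M) \<le> ennreal B"
proof -
  have "incseq (\<lambda>m \<omega>. ennreal (F (rsum s 0 m \<omega>)))"
  proof (intro incseq_SucI le_funI ennreal_leI)
    fix m \<omega>
    show "F (rsum s 0 m \<omega>) \<le> F (rsum s 0 (Suc m) \<omega>)"
      using assms(2) by (rule mono_onD) (auto intro: record_sum_nonneg record_sum_mono)
  qed
  then have "(\<integral>\<^sup>+\<omega>. (SUP m. ennreal (F (rsum s 0 m \<omega>))) \<partial>M) = (SUP m. \<integral>\<^sup>+\<omega>. ennreal (F (rsum s 0 m \<omega>)) \<partial>M)"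
    by (rule nn_integral_monotone_convergence_SUP) simp
  also have "\<dots> \<le> ennreal B"
  proof (rule SUP_least)
    fix m
    have "(\<integral>\<^sup>+\<omega>. ennreal (F (rsum s 0 m \<omega>)) \<partial>M) = ennreal (\<integral>\<omega>. F (rsum s 0 m \<omega>) \<partial>M)"
      using assms(3,4) by (intro nn_integral_eq_integral) (auto intro: record_sum_nonneg)
    then show "(\<integral>\<^sup>+\<omega>. ennreal (F (rsum s 0 m \<omega>)) \<partial>M) \<le> ennreal B"
      using assms(5)[of m] by (simp add: ennreal_leI)
  qed
  finally show ?thesis .
qed

lemma AE_record_sup_finite: "AE \<omega> in M. record_sup 1 \<omega> \<noteq> \<infinity>"
proof (rule nn_integral_PInf_AE)
  have "(\<integral>\<^sup>+\<omega>. record_sup 1 \<omega> \<partial>M) \<le> ennreal (1 / \<alpha>)"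
    unfolding record_sup_def using expectation_rsum_le[of 1] integrable_rsum
    by (intro nn_integral_SUP_rsum_le[where F = "\<lambda>r. r"]) (auto simp: mono_on_def)
  then show "(\<integral>\<^sup>+\<omega>. record_sup 1 \<omega> \<partial>M) \<noteq> \<infinity>"
    by (auto simp: top_unique)
qed simp

lemma record_sup_le_1: "s \<le> 1 \<Longrightarrow> record_sup s \<omega> \<le> record_sup 1 \<omega>"
  unfolding record_sup_def by (intro SUP_mono) (auto intro!: ennreal_leI record_sum_mono_threshold)

lemma
  assumes "s \<le> 1" and "record_sup 1 \<omega> \<noteq> \<infinity>"
  shows rsum_LIMSEQ_record_lim: "(\<lambda>m. rsum s 0 m \<omega>) \<longlonglongrightarrow> record_lim s \<omega>"
    and rsum_le_record_lim: "rsum s 0 m \<omega> \<le> record_lim s \<omega>"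
proof -
  obtain r where r: "record_sup s \<omega> = ennreal r" "0 \<le> r"
    using record_sup_le_1[OF assms(1), of \<omega>] assms(2) by (cases "record_sup s \<omega>") (auto simp: top_unique)
  have "(\<lambda>m. ennreal (rsum s 0 m \<omega>)) \<longlonglongrightarrow> ennreal r"
    unfolding r(1)[symmetric] record_sup_def by (rule LIMSEQ_SUP[OF incseq_rsum])
  then show "(\<lambda>m. rsum s 0 m \<omega>) \<longlonglongrightarrow> record_lim s \<omega>"
    using r by (simp add: record_lim_def tendsto_ennreal_iff record_sum_nonneg)
  have "ennreal (rsum s 0 m \<omega>) \<le> record_sup s \<omega>"
    unfolding record_sup_def by (rule SUP_upper) simp
  then show "rsum s 0 m \<omega> \<le> record_lim s \<omega>"
    using r by (simp add: record_lim_def)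
qed

lemma integrable_record_lim_square: "integrable M (\<lambda>\<omega>. (record_lim 1 \<omega>)\<^sup>2)"
proof (rule integrableI_bounded)
  have "AE \<omega> in M. ennreal (norm ((record_lim 1 \<omega>)\<^sup>2)) \<le> (SUP m. ennreal ((rsum 1 0 m \<omega>)\<^sup>2))"
    using AE_record_sup_finite
  proof eventually_elim
    case (elim \<omega>)
    have "(\<lambda>m. ennreal ((rsum 1 0 m \<omega>)\<^sup>2)) \<longlonglongrightarrow> ennreal ((record_lim 1 \<omega>)\<^sup>2)"
      by (intro tendsto_ennrealI tendsto_intros rsum_LIMSEQ_record_lim elim) simp
    then have "ennreal ((record_lim 1 \<omega>)\<^sup>2) \<le> (SUP m. ennreal ((rsum 1 0 m \<omega>)\<^sup>2))"
      by (rule LIMSEQ_le_const2) (auto intro!: exI[of _ 0] SUP_upper)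
    then show ?case by simp
  qed
  then have "(\<integral>\<^sup>+\<omega>. ennreal (norm ((record_lim 1 \<omega>)\<^sup>2)) \<partial>M) \<le> (\<integral>\<^sup>+\<omega>. (SUP m. ennreal ((rsum 1 0 m \<omega>)\<^sup>2)) \<partial>M)"
    by (rule nn_integral_mono_AE)
  also have "\<dots> \<le> ennreal ((1 + 1 / \<alpha>) / \<alpha>)"
    using second_moment_rsum_le[of 1] integrable_rsum_square
    by (intro nn_integral_SUP_rsum_le[where F = "\<lambda>r. r\<^sup>2"]) (auto simp: mono_on_def power_mono)
  finally show "(\<integral>\<^sup>+\<omega>. ennreal (norm ((record_lim 1 \<omega>)\<^sup>2)) \<partial>M) < \<infinity>"
    by (auto simp: less_top[symmetric] top_unique intro: le_less_trans)
qed simp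

lemma AE_L0_eq_rsum: "AE \<omega> in M. \<forall>m. L0 \<alpha> (\<lambda>i. if i = 0 then 0 else X i \<omega>) m = rsum 1 0 m \<omega>"
  using AE_X_in_unit
proof eventually_elim
  case (elim \<omega>)
  have "L0 \<alpha> (\<lambda>i. if i = 0 then 0 else X i \<omega>) m = record_sum \<alpha> 1 (\<lambda>i. if i = 0 then 0 else X i \<omega>) 0 m" for m
    using elim by (intro L0_eq_record_sum) auto
  also have "\<dots> m = rsum 1 0 m \<omega>" for m
    using elim by (intro record_sum_cong) (auto simp: U_def)
  finally show ?case by simp
qed

lemma measurable_L0_X [measurable]:
  "(\<lambda>\<omega>. L0 \<alpha> (\<lambda>i. if i = 0 then 0 else X i \<omega>) m) \<in> borel_measurable M"
proof (rule measurable_L0)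
  show "(\<lambda>\<omega>. if j = 0 then 0 else X j \<omega>) \<in> borel_measurable M" for j
    by (cases "j = 0") simp_all
qed

lemma AE_L0_LIMSEQ: "AE \<omega> in M. (\<lambda>m. L0 \<alpha> (\<lambda>i. if i = 0 then 0 else X i \<omega>) m) \<longlonglongrightarrow> record_lim 1 \<omega>"
  using AE_L0_eq_rsum AE_record_sup_finite by eventually_elim (simp add: rsum_LIMSEQ_record_lim)

lemma L0_L2_convergence:
  shows "\<forall>m. integrable M (\<lambda>\<omega>. (L0 \<alpha> (\<lambda>i. if i = 0 then 0 else X i \<omega>) m - record_lim 1 \<omega>)\<^sup>2)"
    and "(\<lambda>m. \<integral>\<omega>. (L0 \<alpha> (\<lambda>i. if i = 0 then 0 else X i \<omega>) m - record_lim 1 \<omega>)\<^sup>2 \<partial>M) \<longlonglongrightarrow> 0"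
proof -
  let ?e = "\<lambda>m \<omega>. (L0 \<alpha> (\<lambda>i. if i = 0 then 0 else X i \<omega>) m - record_lim 1 \<omega>)\<^sup>2"
  have [measurable]: "?e m \<in> borel_measurable M" for m
    by measurable
  have lim: "AE \<omega> in M. (\<lambda>m. ?e m \<omega>) \<longlonglongrightarrow> (\<lambda>_. 0) \<omega>"
    using AE_L0_LIMSEQ by eventually_elim (auto intro: tendsto_eq_intros)
  have bound: "AE \<omega> in M. norm (?e m \<omega>) \<le> (record_lim 1 \<omega>)\<^sup>2" for m
    using AE_L0_eq_rsum AE_record_sup_finite
  proof eventually_elim
    case (elim \<omega>)
    then have "0 \<le> L0 \<alpha> (\<lambda>i. if i = 0 then 0 else X i \<omega>) m"
      and "L0 \<alpha> (\<lambda>i. if i = 0 then 0 else X i \<omega>) m \<le> record_lim 1 \<omega>"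
      by (simp_all add: record_sum_nonneg rsum_le_record_lim)
    then have "\<bar>L0 \<alpha> (\<lambda>i. if i = 0 then 0 else X i \<omega>) m - record_lim 1 \<omega>\<bar> \<le> \<bar>record_lim 1 \<omega>\<bar>"
      by linarith
    then show ?case by (simp add: abs_le_square_iff)
  qed
  show "\<forall>m. integrable M (?e m)"
    using integrable_dominated_convergence2[OF _ _ integrable_record_lim_square lim bound] by simp
  show "(\<lambda>m. integral\<^sup>L M (?e m)) \<longlonglongrightarrow> 0"
    using integral_dominated_convergence[OF _ _ integrable_record_lim_square lim bound] by simp
qed


definition char_record_lim :: "real \<Rightarrow> real \<Rightarrow> complex" where
  "char_record_lim t s = (\<integral>\<omega>. iexp (t * record_lim s \<omega>) \<partial>M)"

lemma record_char_LIMSEQ: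
  assumes "s \<le> 1"
  shows "(\<lambda>m. record_char \<alpha> t m s) \<longlonglongrightarrow> char_record_lim t s"
proof -
  have "(\<lambda>m. \<integral>\<omega>. iexp (t * rsum s 0 m \<omega>) \<partial>M) \<longlonglongrightarrow> (\<integral>\<omega>. iexp (t * record_lim s \<omega>) \<partial>M)"
  proof (rule integral_dominated_convergence[where w = "\<lambda>_. 1"])
    show "AE \<omega> in M. (\<lambda>m. iexp (t * rsum s 0 m \<omega>)) \<longlonglongrightarrow> iexp (t * record_lim s \<omega>)"
      using AE_record_sup_finite by eventually_elim (intro tendsto_intros rsum_LIMSEQ_record_lim assms)
  qed (simp_all add: norm_exp_i_times)
  then show ?thesis
    by (simp only: integral_iexp_rsum char_record_lim_def)
qed

lemma norm_char_record_lim_le: "norm (char_record_lim t s) \<le> 1"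
proof -
  have "norm (char_record_lim t s) \<le> (\<integral>\<omega>. norm (iexp (t * record_lim s \<omega>)) \<partial>M)"
    unfolding char_record_lim_def by (rule integral_norm_bound)
  then show ?thesis by (simp add: norm_exp_i_times prob_space)
qed

lemma norm_char_record_lim_sub_1_le:
  assumes "0 \<le> s" "s \<le> 1"
  shows "norm (char_record_lim t s - 1) \<le> \<bar>t\<bar> * (s powr \<alpha> / \<alpha>)"
proof -
  have "(\<lambda>m. norm (record_char \<alpha> t m s - 1)) \<longlonglongrightarrow> norm (char_record_lim t s - 1)"
    using assms by (intro tendsto_intros record_char_LIMSEQ)
  then show ?thesis
    by (rule LIMSEQ_le_const2) (use norm_record_char_sub_1_le[OF assms] in auto)
qed

lemma measurable_char_record_lim_below [measurable]:
  assumes "u \<le> 1"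
  shows "(\<lambda>x. if x \<le> u then char_record_lim t x else 0) \<in> borel_measurable borel"
proof (rule borel_measurable_LIMSEQ_metric)
  show "(\<lambda>m. if x \<le> u then record_char \<alpha> t m x else 0) \<longlonglongrightarrow> (if x \<le> u then char_record_lim t x else 0)" for x
    using assms by (auto intro: record_char_LIMSEQ)
qed simp

lemma char_record_lim_fixpoint:
  assumes s: "0 \<le> s" "s \<le> 1"
  shows "char_record_lim t s =
           (\<integral>x. (if x \<le> s then iexp (t * x powr \<alpha>) * char_record_lim t x else char_record_lim t s) \<partial>unif01)"
proof -
  let ?f = "\<lambda>m x. if x \<le> s then iexp (t * x powr \<alpha>) * record_char \<alpha> t m x else record_char \<alpha> t m s"
  let ?g = "\<lambda>x. if x \<le> s then iexp (t * x powr \<alpha>) * char_record_lim t x else char_record_lim t s"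
  have lim: "(\<lambda>m. ?f m x) \<longlonglongrightarrow> ?g x" for x
  proof (cases "x \<le> s")
    case True
    then show ?thesis using s by (simp add: tendsto_mult_left record_char_LIMSEQ)
  next
    case False
    then show ?thesis using s by (simp add: record_char_LIMSEQ)
  qed
  have "(\<lambda>m. record_char \<alpha> t (Suc m) s) \<longlonglongrightarrow> integral\<^sup>L unif01 ?g"
    unfolding record_char.simps
  proof (rule integral_dominated_convergence[where w = "\<lambda>_. 1"])
    show "?f m \<in> borel_measurable unif01" for m
      by simp
    then show "?g \<in> borel_measurable unif01"
      using lim by (rule borel_measurable_LIMSEQ_metric)
    show "AE x in unif01. norm (?f m x) \<le> 1" for m
      by (simp add: norm_mult norm_exp_i_times norm_record_char_le)
  qed (simp_all add: lim)
  moreover have "(\<lambda>m. record_char \<alpha> t (Suc m) s) \<longlonglongrightarrow> char_record_lim t s"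
    using record_char_LIMSEQ[OF s(2)] by (rule LIMSEQ_Suc)
  ultimately show ?thesis
    using LIMSEQ_unique by blast
qed

lemma
  assumes s: "0 \<le> s" "s \<le> 1"
  shows char_record_lim_volterra:
      "s *\<^sub>R char_record_lim t s = (\<integral>x. (if x \<le> s then iexp (t * x powr \<alpha>) * char_record_lim t x else 0) \<partial>unif01)"
    and integrable_char_record_lim_below:
      "integrable unif01 (\<lambda>x. if x \<le> s then iexp (t * x powr \<alpha>) * char_record_lim t x else 0)"
proof -
  have [measurable]: "(\<lambda>x. if x \<le> s then char_record_lim t x else 0) \<in> borel_measurable borel"
    using s by simp
  have "(\<lambda>x. iexp (t * x powr \<alpha>) * (if x \<le> s then char_record_lim t x else 0)) \<in> borel_measurable borel"
    by measurable
  then show below: "integrable unif01 (\<lambda>x. if x \<le> s then iexp (t * x powr \<alpha>) * char_record_lim t x else 0)"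
    by (intro integrable_unif01_bounded[where B = 1])
       (auto simp: norm_mult norm_exp_i_times norm_char_record_lim_le if_distrib cong: if_cong)
  have above: "integrable unif01 (\<lambda>x. if x \<le> s then 0 else char_record_lim t s)"
    by (intro integrable_unif01_bounded[where B = "norm (char_record_lim t s)"]) auto
  have "char_record_lim t s =
        (\<integral>x. (if x \<le> s then iexp (t * x powr \<alpha>) * char_record_lim t x else 0)
              + (if x \<le> s then 0 else char_record_lim t s) \<partial>unif01)"
    by (subst char_record_lim_fixpoint[OF s]) (auto intro: Bochner_Integration.integral_cong)
  also have "\<dots> = (\<integral>x. (if x \<le> s then iexp (t * x powr \<alpha>) * char_record_lim t x else 0) \<partial>unif01)
                  + (1 - s) *\<^sub>R char_record_lim t s"
    using below above s by (simp add: integral_unif01_above)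
  finally show "s *\<^sub>R char_record_lim t s =
      (\<integral>x. (if x \<le> s then iexp (t * x powr \<alpha>) * char_record_lim t x else 0) \<partial>unif01)"
    by (simp add: algebra_simps)
qed


lemma
  assumes s: "0 < s" "s \<le> 1" and y: "0 \<le> y" "y \<le> 1"
  shows char_record_lim_rescaled_volterra:
      "y *\<^sub>R char_record_lim t (s * y) =
         (\<integral>z. (if z \<le> y then iexp (t * s powr \<alpha> * z powr \<alpha>) * char_record_lim t (s * z) else 0) \<partial>unif01)"
    and integrable_char_record_lim_rescaled_below:
      "integrable unif01 (\<lambda>z. if z \<le> y then iexp (t * s powr \<alpha> * z powr \<alpha>) * char_record_lim t (s * z) else 0)"
proof -
  define e where "e = (\<lambda>z. iexp (t * s powr \<alpha> * z powr \<alpha>))"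
  have sy: "0 \<le> s * y" "s * y \<le> 1"
    using s y by (auto simp: mult_le_one)
  let ?f = "\<lambda>x. if x \<le> s * y then iexp (t * x powr \<alpha>) * char_record_lim t x else 0"
  have f_meas [measurable]: "?f \<in> borel_measurable borel"
    using borel_measurable_integrable[OF integrable_char_record_lim_below[OF sy]] by simp
  have [measurable]: "(\<lambda>x. if x \<le> s * y then char_record_lim t x else 0) \<in> borel_measurable borel"
    using sy by simp
  have "(\<lambda>z. e z * (if s * z \<le> s * y then char_record_lim t (s * z) else 0)) \<in> borel_measurable borel"
    unfolding e_def by measurable
  then have meas: "(\<lambda>z. if z \<le> y then e z * char_record_lim t (s * z) else 0) \<in> borel_measurable borel"
    using s by (simp add: if_distrib cong: if_cong)
  then have "integrable unif01 (\<lambda>z. if z \<le> y then e z * char_record_lim t (s * z) else 0)"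
    by (intro integrable_unif01_bounded[where B = 1])
       (auto simp: e_def norm_mult norm_exp_i_times norm_char_record_lim_le)
  then show "integrable unif01 (\<lambda>z. if z \<le> y then iexp (t * s powr \<alpha> * z powr \<alpha>) * char_record_lim t (s * z) else 0)"
    by (simp only: e_def)
  have "?f \<circ> (\<lambda>z. s * z) \<in> borel_measurable borel"
    by measurable
  then have "(\<lambda>z. if z \<le> y then iexp (t * (s * z) powr \<alpha>) * char_record_lim t (s * z) else 0)
               \<in> borel_measurable borel"
    using s by (simp add: comp_def)
  then have "(\<integral>z. (if z \<le> y then iexp (t * (s * z) powr \<alpha>) * char_record_lim t (s * z) else 0) \<partial>unif01) =
             (\<integral>z. (if z \<le> y then e z * char_record_lim t (s * z) else 0) \<partial>unif01)"
    using meas AE_unif01 s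
    by (intro integral_cong_AE) (auto elim!: AE_mp simp: e_def powr_mult mult.assoc)
  moreover have "s *\<^sub>R (y *\<^sub>R char_record_lim t (s * y)) =
      s *\<^sub>R (\<integral>z. (if z \<le> y then iexp (t * (s * z) powr \<alpha>) * char_record_lim t (s * z) else 0) \<partial>unif01)"
    using char_record_lim_volterra[OF sy, of t]
      integral_unif01_scale[where f = "\<lambda>x. iexp (t * x powr \<alpha>) * char_record_lim t x", OF f_meas s y]
    by simp
  ultimately have "y *\<^sub>R char_record_lim t (s * y) =
      (\<integral>z. (if z \<le> y then e z * char_record_lim t (s * z) else 0) \<partial>unif01)"
    using s by (simp only: scaleR_cancel_left) auto
  then show "y *\<^sub>R char_record_lim t (s * y) =
      (\<integral>z. (if z \<le> y then iexp (t * s powr \<alpha> * z powr \<alpha>) * char_record_lim t (s * z) else 0) \<partial>unif01)"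
    by (simp only: e_def)
qed

lemma char_record_lim_scale:
  assumes s: "0 < s" "s \<le> 1"
  shows "char_record_lim t s = char_record_lim (t * s powr \<alpha>) 1"
proof -
  define \<tau> where "\<tau> = t * s powr \<alpha>"
  define e where "e = (\<lambda>x. iexp (\<tau> * x powr \<alpha>))"
  define d where "d = (\<lambda>y. char_record_lim t (s * y) - char_record_lim \<tau> y)"
  have sy: "0 \<le> s * y" "s * y \<le> 1" if "0 \<le> y" "y \<le> 1" for y
    using that s by (auto simp: mult_le_one)
  \<comment> \<open>Both y \<mapsto> char_record_lim t (s * y) and char_record_lim \<tau> solve the Volterra equation
    with kernel e, so their difference d vanishes.\<close>
  have scaled: "y *\<^sub>R char_record_lim t (s * y) =
                  (\<integral>z. (if z \<le> y then e z * char_record_lim t (s * z) else 0) \<partial>unif01)"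
    and integrable_scaled: "integrable unif01 (\<lambda>z. if z \<le> y then e z * char_record_lim t (s * z) else 0)"
    if "0 \<le> y" "y \<le> 1" for y
    unfolding e_def \<tau>_def
    by (rule char_record_lim_rescaled_volterra[OF s that] integrable_char_record_lim_rescaled_below[OF s that])+
  have "d 1 = 0"
  proof (rule unif01_volterra_eq_0[where a = \<alpha> and K = "(\<bar>t\<bar> + \<bar>\<tau>\<bar>) / \<alpha>" and e = e])
    fix y :: real assume y: "0 \<le> y" "y \<le> 1"
    have split: "(\<lambda>x. if x \<le> y then e x * d x else 0) =
        (\<lambda>x. (if x \<le> y then e x * char_record_lim t (s * x) else 0) -
              (if x \<le> y then e x * char_record_lim \<tau> x else 0))"
      by (auto simp: d_def algebra_simps)
    have unscaled: "y *\<^sub>R char_record_lim \<tau> y = (\<integral>x. (if x \<le> y then e x * char_record_lim \<tau> x else 0) \<partial>unif01)"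
      "integrable unif01 (\<lambda>x. if x \<le> y then e x * char_record_lim \<tau> x else 0)"
      unfolding e_def by (rule char_record_lim_volterra[OF y] integrable_char_record_lim_below[OF y])+
    show "integrable unif01 (\<lambda>x. if x \<le> y then e x * d x else 0)"
      unfolding split using integrable_scaled[OF y] unscaled(2) by (rule Bochner_Integration.integrable_diff)
    show "y *\<^sub>R d y = (\<integral>x. (if x \<le> y then e x * d x else 0) \<partial>unif01)"
      unfolding split using integrable_scaled[OF y] unscaled scaled[OF y]
      by (simp add: d_def scaleR_diff_right)
    have "(s * y) powr \<alpha> \<le> y powr \<alpha>"
      using s y alpha_pos by (intro powr_mono2) (auto simp: mult_left_le_one_le)
    then have "\<bar>t\<bar> * ((s * y) powr \<alpha> / \<alpha>) \<le> \<bar>t\<bar> * (y powr \<alpha> / \<alpha>)"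
      using alpha_pos by (intro mult_left_mono divide_right_mono) auto
    then have "norm (d y) \<le> \<bar>t\<bar> * (y powr \<alpha> / \<alpha>) + \<bar>\<tau>\<bar> * (y powr \<alpha> / \<alpha>)"
      using norm_char_record_lim_sub_1_le[OF sy[OF y], of t] norm_char_record_lim_sub_1_le[OF y, of \<tau>]
        norm_triangle_ineq4[of "char_record_lim t (s * y) - 1" "char_record_lim \<tau> y - 1"]
      by (simp add: d_def)
    then show "norm (d y) \<le> (\<bar>t\<bar> + \<bar>\<tau>\<bar>) / \<alpha> * y powr \<alpha>"
      by (simp add: algebra_simps add_divide_distrib)
  qed (auto simp: alpha_pos e_def norm_exp_i_times)
  then show ?thesis by (simp add: d_def \<tau>_def)
qed

lemma char_distr_record_lim: "char (distr M borel (record_lim 1)) t = char_record_lim t 1"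
  unfolding char_def char_record_lim_def by (subst integral_distr) auto

lemma integral_iexp_dickman_map:
  assumes "0 < u" "u \<le> 1"
  shows "(\<integral>x. iexp (t * (u powr \<alpha> * (1 + x))) \<partial>distr M borel (record_lim 1)) =
         iexp (t * u powr \<alpha>) * char_record_lim t u"
proof -
  have "(\<integral>x. iexp (t * (u powr \<alpha> * (1 + x))) \<partial>distr M borel (record_lim 1)) =
        (\<integral>x. iexp (t * u powr \<alpha>) * iexp (t * u powr \<alpha> * x) \<partial>distr M borel (record_lim 1))"
    by (simp add: distrib_left exp_add[symmetric] algebra_simps)
  also have "\<dots> = iexp (t * u powr \<alpha>) * char (distr M borel (record_lim 1)) (t * u powr \<alpha>)"
    unfolding char_def by simp
  finally show ?thesis
    using assms by (simp add: char_distr_record_lim char_record_lim_scale[OF assms, symmetric])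
qed

lemma char_distr_dickman_map:
  "char (distr (unif01 \<Otimes>\<^sub>M distr M borel (record_lim 1)) borel (\<lambda>(u, x). u powr \<alpha> * (1 + x))) t =
   char_record_lim t 1"
proof -
  let ?\<mu> = "distr M borel (record_lim 1)"
  interpret \<mu>: prob_space ?\<mu>
    by (rule prob_space_distr) simp
  interpret P: pair_prob_space unif01 ?\<mu> ..
  let ?F = "\<lambda>(u, x). iexp (t * (u powr \<alpha> * (1 + x)))"
  have [measurable]: "(\<lambda>(u, x). u powr \<alpha> * (1 + x)) \<in> borel_measurable (unif01 \<Otimes>\<^sub>M ?\<mu>)"
    by (subst measurable_cong_sets[OF sets_pair_measure_cong[OF sets_unif01 sets_distr] refl]) measurable
  then have integrable_F: "integrable (unif01 \<Otimes>\<^sub>M ?\<mu>) ?F"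
    by (intro P.integrable_const_bound[where B = 1]) (auto simp: norm_exp_i_times case_prod_beta')
  have [measurable]: "(\<lambda>u. if u \<le> 1 then char_record_lim t u else 0) \<in> borel_measurable borel"
    by simp
  have "char (distr (unif01 \<Otimes>\<^sub>M ?\<mu>) borel (\<lambda>(u, x). u powr \<alpha> * (1 + x))) t = integral\<^sup>L (unif01 \<Otimes>\<^sub>M ?\<mu>) ?F"
    unfolding char_def by (subst integral_distr) (auto simp: case_prod_beta')
  also have "\<dots> = (\<integral>u. (\<integral>x. ?F (u, x) \<partial>?\<mu>) \<partial>unif01)"
    by (rule P.integral_fst'[OF integrable_F, symmetric])
  also have "\<dots> = (\<integral>u. (if u \<le> 1 then iexp (t * u powr \<alpha>) * char_record_lim t u else char_record_lim t 1) \<partial>unif01)"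
  proof (rule integral_cong_AE)
    show "(\<lambda>u. \<integral>x. ?F (u, x) \<partial>?\<mu>) \<in> borel_measurable unif01"
      by (rule borel_measurable_integrable[OF P.integrable_fst'[OF integrable_F]])
    have "(\<lambda>u. iexp (t * u powr \<alpha>) * (if u \<le> 1 then char_record_lim t u else 0)
               + (if u \<le> 1 then 0 else char_record_lim t 1))
            \<in> borel_measurable unif01"
      by measurable
    then show "(\<lambda>u. if u \<le> 1 then iexp (t * u powr \<alpha>) * char_record_lim t u else char_record_lim t 1)
                 \<in> borel_measurable unif01"
      by (rule measurable_cong[THEN iffD1, rotated]) auto
    show "AE u in unif01. (\<integral>x. ?F (u, x) \<partial>?\<mu>) =
            (if u \<le> 1 then iexp (t * u powr \<alpha>) * char_record_lim t u else char_record_lim t 1)"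
      using AE_unif01
    proof eventually_elim
      case (elim u)
      then show ?case using integral_iexp_dickman_map[of u t] by simp
    qed
  qed
  also have "\<dots> = char_record_lim t 1"
    by (rule char_record_lim_fixpoint[symmetric]) auto
  finally show ?thesis .
qed

lemma gen_dickman_distr_record_lim: "gen_dickman (1 / \<alpha>) (distr M borel (record_lim 1))"
  unfolding gen_dickman_def
proof (intro conjI)
  let ?\<mu> = "distr M borel (record_lim 1)"
  show "prob_space ?\<mu>"
    by (rule prob_space_distr) simp
  then interpret \<mu>: prob_space ?\<mu> .
  interpret P: pair_prob_space unif01 ?\<mu> ..
  show "sets ?\<mu> = sets borel"
    by simp
  show "AE x in ?\<mu>. 0 \<le> x"
    by (subst AE_distr_iff) (auto simp: record_lim_nonneg)
  have [measurable]: "(\<lambda>(u, x). u powr \<alpha> * (1 + x)) \<in> borel_measurable (unif01 \<Otimes>\<^sub>M ?\<mu>)"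
    by (subst measurable_cong_sets[OF sets_pair_measure_cong[OF sets_unif01 sets_distr] refl]) measurable
  have "?\<mu> = distr (unif01 \<Otimes>\<^sub>M ?\<mu>) borel (\<lambda>(u, x). u powr \<alpha> * (1 + x))"
    by (rule Levy_uniqueness) (auto intro: real_distribution_distr P.real_distribution_distr
                                    simp: fun_eq_iff char_distr_record_lim char_distr_dickman_map)
  then show "?\<mu> = distr (uniform_measure lborel {0<..<1} \<Otimes>\<^sub>M ?\<mu>) borel (\<lambda>(u, x). u powr (1 / (1 / \<alpha>)) * (1 + x))"
    by (simp add: uniform_measure_eq_unif01)
qed

end

theorem lemma2:
  fixes M :: "'a measure" and X :: "nat \<Rightarrow> 'a \<Rightarrow> real" and \<alpha> :: real
  assumes "prob_space M"
    and "\<alpha> > 0"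
    and "prob_space.indep_vars M (\<lambda>_. borel) X {1..}"
    and "\<And>i. i \<ge> 1 \<Longrightarrow> distributed M lborel (X i) (\<lambda>x. ennreal (indicator {0<..1} x))"
  shows "\<exists>L. L \<in> borel_measurable M \<and>
           gen_dickman (1 / \<alpha>) (distr M borel L) \<and>
           (AE \<omega> in M. (\<lambda>m. L0 \<alpha> (\<lambda>i. if i = 0 then 0 else X i \<omega>) m) \<longlonglongrightarrow> L \<omega>) \<and>
           integrable M (\<lambda>\<omega>. (L \<omega>)\<^sup>2) \<and>
           (\<forall>m. integrable M (\<lambda>\<omega>. (L0 \<alpha> (\<lambda>i. if i = 0 then 0 else X i \<omega>) m - L \<omega>)\<^sup>2)) \<and>
           (\<lambda>m. integral\<^sup>L M (\<lambda>\<omega>. (L0 \<alpha> (\<lambda>i. if i = 0 then 0 else X i \<omega>) m - L \<omega>)\<^sup>2))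
              \<longlonglongrightarrow> 0"
proof -
  interpret uniform_records M X \<alpha>
    using assms by (intro uniform_records.intro uniform_seq.intro uniform_seq_axioms.intro
                          uniform_records_axioms.intro)
  show ?thesis
    using gen_dickman_distr_record_lim AE_L0_LIMSEQ integrable_record_lim_square L0_L2_convergence
    by (intro exI[of _ "record_lim 1"]) simp
qed

end
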